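(* Let $R$ be an integral domain of characteristic zero, $n,d\ge1$, $F\in R[x]_d$, and $G=x_0^d+\cdots+x_n^d$. Let $s\ge1$, $h\ge(d-1)(n+1)+1$, $v\in B_{ds}$ and $w\in B_h$. For $k\ge1$ and $H\in R[x]_{kds}$ let $[H]_k$ denote the vector $(H_{kv+w-t})_{t\in B_h}$. Then there is a matrix $Q$, with rows and columns indexed by $B_h$ and entries that are polynomials of degree at most $1$ in $R[k,\ell]$, such that for all integers $k_0\ge1$ and $0\le\ell_0<k_0s$, $$d(k_0s-\ell_0)\,[G^{k_0s-\ell_0-1}F^{\ell_0+1}]_{k_0}=Q(k_0,\ell_0)\,[G^{k_0s-\ell_0}F^{\ell_0}]_{k_0},$$ and consequently, for all $k_0\ge1$, in the fraction field of $R$, $$[F^{k_0s}]_{k_0}=\frac{1}{d^{k_0s}(k_0s)!}\,Q(k_0,k_0s-1)\cdots Q(k_0,1)Q(k_0,0)\,[G^{k_0s}]_{k_0}.$$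
   Context: $R[x]=R[x_0,\dots,x_n]$; $R[x]_k$ is the submodule of homogeneous polynomials of degree $k$; $B_k=\{u\in\mathbf N^{n+1}:u_0+\cdots+u_n=k\}$; for $H\in R[x]$ and $u\in\mathbf Z^{n+1}$, $H_u$ is the coefficient of $x^u=x_0^{u_0}\cdots x_n^{u_n}$ in $H$, with $H_u=0$ if some $u_i<0$. *)

theory Defs
  imports "HOL-Library.Poly_Mapping" "HOL-Computational_Algebra.Fraction_Field"
begin

text \<open>Polynomials in the variables x_0,...,x_n over R are represented as finitely
  supported maps from exponent vectors (nat =>0 nat, variable index to exponent) to R.
  Only exponent vectors supported in {0..n} are relevant.\<close>

type_synonym 'a mpoly = "(nat \<Rightarrow>\<^sub>0 nat) \<Rightarrow>\<^sub>0 'a"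

definition B :: "nat \<Rightarrow> nat \<Rightarrow> (nat \<Rightarrow>\<^sub>0 nat) set" where
  "B n k = {u. Poly_Mapping.keys u \<subseteq> {0..n} \<and> (\<Sum>i\<le>n. Poly_Mapping.lookup u i) = k}"

definition homogeneous :: "nat \<Rightarrow> nat \<Rightarrow> 'a::zero mpoly \<Rightarrow> bool" where
  "homogeneous n k H \<longleftrightarrow> Poly_Mapping.keys H \<subseteq> B n k"

definition xpow :: "nat \<Rightarrow> nat \<Rightarrow> 'a::{zero,one} mpoly" where
  "xpow i e = Poly_Mapping.single (Poly_Mapping.single i e) 1"

definition fermat :: "nat \<Rightarrow> nat \<Rightarrow> 'a::comm_semiring_1 mpoly" where
  "fermat n d = (\<Sum>i\<le>n. xpow i d)"

text \<open>H_u for u in Z^(n+1) (entries u_i for i > n are required to be 0);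
  H_u = 0 if some u_i < 0.\<close>
definition coeffZ :: "nat \<Rightarrow> 'a::zero mpoly \<Rightarrow> (nat \<Rightarrow> int) \<Rightarrow> 'a" where
  "coeffZ n H u = (if (\<forall>i. 0 \<le> u i) \<and> (\<forall>i>n. u i = 0)
                   then Poly_Mapping.lookup H (Abs_poly_mapping (\<lambda>i. nat (u i))) else 0)"

definition bracket :: "nat \<Rightarrow> (nat \<Rightarrow>\<^sub>0 nat) \<Rightarrow> (nat \<Rightarrow>\<^sub>0 nat) \<Rightarrow> nat \<Rightarrow> 'a::zero mpoly
    \<Rightarrow> (nat \<Rightarrow>\<^sub>0 nat) \<Rightarrow> 'a" where
  "bracket n v w k H t =
     coeffZ n H (\<lambda>i. int k * int (Poly_Mapping.lookup v i) + int (Poly_Mapping.lookup w i) - int (Poly_Mapping.lookup t i))"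

definition matvec :: "'i set \<Rightarrow> ('i \<Rightarrow> 'i \<Rightarrow> 'b::comm_semiring_1) \<Rightarrow> ('i \<Rightarrow> 'b) \<Rightarrow> 'i \<Rightarrow> 'b" where
  "matvec I M x = (\<lambda>t. \<Sum>t'\<in>I. M t t' * x t')"

fun iter_mat :: "'i set \<Rightarrow> (nat \<Rightarrow> 'i \<Rightarrow> 'i \<Rightarrow> 'b::comm_semiring_1) \<Rightarrow> nat \<Rightarrow> ('i \<Rightarrow> 'b) \<Rightarrow> 'i \<Rightarrow> 'b" where
  "iter_mat I M 0 x = x"
| "iter_mat I M (Suc m) x = matvec I (M m) (iter_mat I M m x)"

end

theory Submission
  imports Defs
begin

text \<open>Since \<open>h > (d - 1)(n + 1)\<close>, every \<open>t \<in> B\<^sub>h\<close> has an exponent \<open>t\<^sub>i \<ge> d\<close>, so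
  \<open>x\<^sup>t = x\<^sup>u x\<^sub>i\<^sup>d\<close>. The Euler operator \<open>E\<^sub>i = x\<^sub>i \<partial>/\<partial>x\<^sub>i\<close> satisfies \<open>E\<^sub>i G = d x\<^sub>i\<^sup>d\<close>, hence
  \<open>d m x\<^sup>t G\<^sup>m\<^sup>-\<^sup>1 F\<^sup>l\<^sup>+\<^sup>1 = x\<^sup>u F\<^sup>l\<^sup>+\<^sup>1 E\<^sub>i(G\<^sup>m) = E\<^sub>i(x\<^sup>u F\<^sup>l\<^sup>+\<^sup>1 G\<^sup>m) - E\<^sub>i(x\<^sup>u F\<^sup>l\<^sup>+\<^sup>1) G\<^sup>m\<close>.
  On the coefficient of \<open>x\<^sup>k\<^sup>v\<^sup>+\<^sup>w\<close> the operator \<open>E\<^sub>i\<close> acts as the scalar \<open>k v\<^sub>i + w\<^sub>i\<close>, and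
  \<open>E\<^sub>i(x\<^sup>u F\<^sup>l\<^sup>+\<^sup>1) = u\<^sub>i x\<^sup>u F\<^sup>l\<^sup>+\<^sup>1 + (l + 1) x\<^sup>u F\<^sup>l E\<^sub>i F\<close>. As \<open>x\<^sup>u F\<close> and \<open>x\<^sup>u E\<^sub>i F\<close> are homogeneous
  of degree \<open>h\<close>, the right-hand side is a combination of the entries of \<open>[G\<^sup>m F\<^sup>l]\<^sub>k\<close> with
  coefficients affine in \<open>k\<close> and \<open>l\<close>. Iterating from \<open>l = 0\<close> to \<open>ks - 1\<close> produces the factor
  \<open>\<Prod>\<^sub>l d(ks - l) = d\<^sup>k\<^sup>s (ks)!\<close>, which is invertible in the fraction field.\<close>

abbreviation monomial :: "(nat \<Rightarrow>\<^sub>0 nat) \<Rightarrow> 'a::{zero,one} mpoly" where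
  "monomial u \<equiv> Poly_Mapping.single u 1"

lemma poly_mapping_sum_single:
  "P = (\<Sum>a\<in>Poly_Mapping.keys P. Poly_Mapping.single a (Poly_Mapping.lookup P a))"
  by (rule poly_mapping_eqI) (simp add: lookup_sum lookup_single when_def in_keys_iff)

lemma lookup_single_mult:
  fixes Q :: "'a::comm_semiring_1 mpoly"
  shows "Poly_Mapping.lookup (Poly_Mapping.single a x * Q) u =
    (if \<forall>i. Poly_Mapping.lookup a i \<le> Poly_Mapping.lookup u i
     then x * Poly_Mapping.lookup Q (u - a) else 0)"
proof -
  have "u = a + q \<longleftrightarrow> (\<forall>i. Poly_Mapping.lookup a i \<le> Poly_Mapping.lookup u i) \<and> q = u - a"
    for q :: "nat \<Rightarrow>\<^sub>0 nat"
    by (auto simp: poly_mapping_eq_iff fun_eq_iff lookup_add lookup_minus)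
  then show ?thesis
    by (simp add: lookup_mult lookup_single when_mult)
qed

lemma lookup_single_mult_eq_scale:
  fixes P :: "'a::comm_semiring_1 mpoly"
  shows "Poly_Mapping.lookup (Poly_Mapping.single t x * P) u = x * Poly_Mapping.lookup (monomial t * P) u"
  by (simp add: lookup_single_mult)

lemma lookup_of_nat_mult:
  fixes P :: "'a::comm_semiring_1 mpoly"
  shows "Poly_Mapping.lookup (of_nat c * P) u = of_nat c * Poly_Mapping.lookup P u"
  by (simp flip: single_of_nat add: lookup_single_mult)

lemma of_nat_mult_single:
  "(of_nat c :: 'a::comm_semiring_1 mpoly) * Poly_Mapping.single a x = Poly_Mapping.single a (of_nat c * x)"
  by (simp flip: single_of_nat add: mult_single)

lemma lookup_mult_eq_sum_monomials:
  fixes C P :: "'a::comm_semiring_1 mpoly"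
  assumes "finite I" and "Poly_Mapping.keys C \<subseteq> I"
  shows "Poly_Mapping.lookup (C * P) N =
    (\<Sum>t\<in>I. Poly_Mapping.lookup C t * Poly_Mapping.lookup (monomial t * P) N)"
proof -
  have "Poly_Mapping.lookup (C * P) N =
      (\<Sum>t\<in>Poly_Mapping.keys C. Poly_Mapping.lookup C t * Poly_Mapping.lookup (monomial t * P) N)"
    by (subst poly_mapping_sum_single[of C])
      (simp add: sum_distrib_right lookup_sum lookup_single_mult_eq_scale[where x = "Poly_Mapping.lookup C _"])
  also have "\<dots> = (\<Sum>t\<in>I. Poly_Mapping.lookup C t * Poly_Mapping.lookup (monomial t * P) N)"
    using assms by (intro sum.mono_neutral_left) (auto simp: in_keys_iff)
  finally show ?thesis .
qed

definition euler_deriv :: "nat \<Rightarrow> 'a::comm_semiring_1 mpoly \<Rightarrow> 'a mpoly" where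
  "euler_deriv i P = Poly_Mapping.mapp (\<lambda>u c. of_nat (Poly_Mapping.lookup u i) * c) P"

lemma lookup_euler_deriv:
  "Poly_Mapping.lookup (euler_deriv i P) u = of_nat (Poly_Mapping.lookup u i) * Poly_Mapping.lookup P u"
  by (simp add: euler_deriv_def lookup_mapp when_def in_keys_iff)

lemma keys_euler_deriv: "Poly_Mapping.keys (euler_deriv i P) \<subseteq> Poly_Mapping.keys P"
  unfolding euler_deriv_def by (rule keys_mapp_subset)

lemma euler_deriv_sum: "euler_deriv i (sum f A) = (\<Sum>a\<in>A. euler_deriv i (f a))"
  by (rule poly_mapping_eqI) (simp add: lookup_euler_deriv lookup_sum sum_distrib_left)

lemma euler_deriv_single:
  "euler_deriv i (Poly_Mapping.single a x) = Poly_Mapping.single a (of_nat (Poly_Mapping.lookup a i) * x)"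
  by (rule poly_mapping_eqI) (simp add: lookup_euler_deriv lookup_single when_def)

lemma euler_deriv_single_mult:
  "euler_deriv i (Poly_Mapping.single a x * Q) =
    euler_deriv i (Poly_Mapping.single a x) * Q + Poly_Mapping.single a x * euler_deriv i Q"
proof (rule poly_mapping_eqI)
  fix u
  show "Poly_Mapping.lookup (euler_deriv i (Poly_Mapping.single a x * Q)) u =
    Poly_Mapping.lookup (euler_deriv i (Poly_Mapping.single a x) * Q + Poly_Mapping.single a x * euler_deriv i Q) u"
  proof (cases "\<forall>j. Poly_Mapping.lookup a j \<le> Poly_Mapping.lookup u j")
    case True
    then have "Poly_Mapping.lookup u i = Poly_Mapping.lookup a i + Poly_Mapping.lookup (u - a) i"
      by (simp add: lookup_minus)
    with True show ?thesis
      by (simp add: euler_deriv_single lookup_add lookup_single_mult lookup_euler_deriv)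
        (simp add: algebra_simps)
  next
    case False
    then show ?thesis
      by (auto simp: euler_deriv_single lookup_add lookup_single_mult lookup_euler_deriv)
  qed
qed

lemma euler_deriv_mult: "euler_deriv i (P * Q) = euler_deriv i P * Q + P * euler_deriv i Q"
proof -
  let ?s = "\<lambda>a. Poly_Mapping.single a (Poly_Mapping.lookup P a)"
  have "euler_deriv i (P * Q) = (\<Sum>a\<in>Poly_Mapping.keys P. euler_deriv i (?s a) * Q + ?s a * euler_deriv i Q)"
    by (subst poly_mapping_sum_single[of P]) (simp add: sum_distrib_right euler_deriv_sum euler_deriv_single_mult)
  also have "\<dots> = euler_deriv i P * Q + P * euler_deriv i Q"
    by (subst (3 4) poly_mapping_sum_single[of P]) (simp add: sum.distrib sum_distrib_right euler_deriv_sum)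
  finally show ?thesis .
qed

lemma euler_deriv_power: "euler_deriv i (P ^ Suc m) = of_nat (Suc m) * P ^ m * euler_deriv i P"
  by (induction m) (simp_all add: euler_deriv_mult algebra_simps)

lemma euler_deriv_fermat:
  assumes "i \<le> n"
  shows "euler_deriv i (fermat n d :: 'a::comm_semiring_1 mpoly) = of_nat d * xpow i d"
proof -
  have "euler_deriv i (xpow j d :: 'a mpoly) = (if i = j then of_nat d * xpow j d else 0)" for j
    by (simp add: xpow_def euler_deriv_single of_nat_mult_single lookup_single)
  with assms show ?thesis
    by (simp add: fermat_def euler_deriv_sum)
qed

lemma finite_B: "finite (B n h)"
proof -
  let ?S = "{f :: nat \<Rightarrow> nat. \<forall>x. (x \<in> {0..n} \<longrightarrow> f x \<in> {0..h}) \<and> (x \<notin> {0..n} \<longrightarrow> f x = 0)}"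
  have "finite ?S"
    by (rule finite_set_of_finite_funs) auto
  moreover have "B n h \<subseteq> Abs_poly_mapping ` ?S"
  proof
    fix u assume u: "u \<in> B n h"
    have "Poly_Mapping.lookup u x \<le> h" if "x \<le> n" for x
      using u that member_le_sum[of x "{..n}" "Poly_Mapping.lookup u"] by (auto simp: B_def)
    moreover have "Poly_Mapping.lookup u x = 0" if "x > n" for x
      using u that by (auto simp: B_def in_keys_iff)
    ultimately have "Poly_Mapping.lookup u \<in> ?S"
      by (auto simp: not_le)
    then show "u \<in> Abs_poly_mapping ` ?S"
      using lookup_inverse[of u, symmetric] by blast
  qed
  ultimately show ?thesis
    using finite_surj by blast
qed

lemma add_in_B: "a \<in> B n p \<Longrightarrow> b \<in> B n q \<Longrightarrow> a + b \<in> B n (p + q)"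
  using keys_add[of a b] by (auto simp: B_def lookup_add sum.distrib)

lemma keys_mult_subset_B:
  assumes "Poly_Mapping.keys P \<subseteq> B n p" and "Poly_Mapping.keys Q \<subseteq> B n q"
  shows "Poly_Mapping.keys (P * Q) \<subseteq> B n (p + q)"
  using keys_mult[of P Q] assms add_in_B by blast

lemma B_obtain_large_exponent:
  assumes "t \<in> B n h" and "(d - 1) * (n + 1) < h"
  obtains i where "i \<le> n" and "d \<le> Poly_Mapping.lookup t i"
proof (rule ccontr)
  assume "\<not> thesis"
  with that have "\<forall>i\<in>{..n}. Poly_Mapping.lookup t i \<le> d - 1"
    by force
  then have "(\<Sum>i\<le>n. Poly_Mapping.lookup t i) \<le> (n + 1) * (d - 1)"
    using sum_bounded_above[of "{..n}" "Poly_Mapping.lookup t" "d - 1"] by simp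
  with assms show False
    by (auto simp: B_def algebra_simps)
qed

lemma B_diff_single:
  assumes "t \<in> B n h" and "i \<le> n" and "d \<le> Poly_Mapping.lookup t i"
  shows "t - Poly_Mapping.single i d \<in> B n (h - d)"
    and "t = (t - Poly_Mapping.single i d) + Poly_Mapping.single i d"
    and "d \<le> h"
proof -
  let ?u = "t - Poly_Mapping.single i d"
  show split: "t = ?u + Poly_Mapping.single i d"
    by (rule poly_mapping_eqI) (use assms in \<open>auto simp: lookup_add lookup_minus lookup_single when_def\<close>)
  have "Poly_Mapping.lookup t i \<le> (\<Sum>j\<le>n. Poly_Mapping.lookup t j)"
    using assms(2) by (intro member_le_sum) auto
  with assms show "d \<le> h"
    by (simp add: B_def)
  have "h = (\<Sum>j\<le>n. Poly_Mapping.lookup ?u j) + (\<Sum>j\<le>n. Poly_Mapping.lookup (Poly_Mapping.single i d) j)"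
    using assms(1) by (subst (asm) split) (simp add: B_def lookup_add sum.distrib)
  moreover have "(\<Sum>j\<le>n. Poly_Mapping.lookup (Poly_Mapping.single i d) j) = d"
    using assms(2) by (simp add: lookup_single when_def)
  moreover have "Poly_Mapping.keys ?u \<subseteq> {0..n}"
    using assms(1) by (auto simp: B_def in_keys_iff lookup_minus)
  ultimately show "?u \<in> B n (h - d)"
    by (simp add: B_def)
qed

definition affine_exponent :: "nat \<Rightarrow> (nat \<Rightarrow>\<^sub>0 nat) \<Rightarrow> (nat \<Rightarrow>\<^sub>0 nat) \<Rightarrow> (nat \<Rightarrow>\<^sub>0 nat)" where
  "affine_exponent k v w = (\<Sum>_<k. v) + w"

lemma lookup_affine_exponent:
  "Poly_Mapping.lookup (affine_exponent k v w) i = k * Poly_Mapping.lookup v i + Poly_Mapping.lookup w i"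
  unfolding affine_exponent_def lookup_add lookup_sum by simp

lemma bracket_eq_lookup:
  fixes H :: "'a::comm_semiring_1 mpoly"
  assumes "Poly_Mapping.keys t \<subseteq> {0..n}" and "Poly_Mapping.keys v \<subseteq> {0..n}"
    and "Poly_Mapping.keys w \<subseteq> {0..n}"
  shows "bracket n v w k H t = Poly_Mapping.lookup (monomial t * H) (affine_exponent k v w)"
proof -
  let ?N = "affine_exponent k v w"
  let ?u = "\<lambda>i. int k * int (Poly_Mapping.lookup v i) + int (Poly_Mapping.lookup w i) - int (Poly_Mapping.lookup t i)"
  have u_eq: "?u i = int (Poly_Mapping.lookup ?N i) - int (Poly_Mapping.lookup t i)" for i
    by (simp add: lookup_affine_exponent)
  have "?u i = 0" if "i > n" for i
  proof -
    have "i \<notin> Poly_Mapping.keys t" "i \<notin> Poly_Mapping.keys v" "i \<notin> Poly_Mapping.keys w"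
      using assms that by auto
    then show ?thesis
      by (simp add: in_keys_iff)
  qed
  moreover have "(\<forall>i. 0 \<le> ?u i) \<longleftrightarrow> (\<forall>i. Poly_Mapping.lookup t i \<le> Poly_Mapping.lookup ?N i)"
    unfolding u_eq by simp
  ultimately have in_range: "((\<forall>i. 0 \<le> ?u i) \<and> (\<forall>i>n. ?u i = 0)) \<longleftrightarrow>
      (\<forall>i. Poly_Mapping.lookup t i \<le> Poly_Mapping.lookup ?N i)"
    by blast
  have "(\<lambda>i. nat (?u i)) = Poly_Mapping.lookup (?N - t)"
    unfolding u_eq by (simp add: fun_eq_iff lookup_minus nat_minus_as_int)
  then have "Abs_poly_mapping (\<lambda>i. nat (?u i)) = ?N - t"
    by (simp add: lookup_inverse)
  then show ?thesis
    unfolding bracket_def coeffZ_def in_range by (simp add: lookup_single_mult)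
qed

lemma fermat_power_reduction:
  fixes F :: "'a::comm_ring_1 mpoly" and n d :: nat
  assumes "i \<le> n" and "0 < m"
  defines "G \<equiv> fermat n d :: 'a mpoly"
  shows "of_nat (d * m) * (monomial (u + Poly_Mapping.single i d) * (G ^ (m - 1) * F ^ (l + 1))) =
    euler_deriv i (monomial u * F * (G ^ m * F ^ l))
    - of_nat (Poly_Mapping.lookup u i) * (monomial u * F * (G ^ m * F ^ l))
    - of_nat (l + 1) * (monomial u * euler_deriv i F * (G ^ m * F ^ l))"
proof -
  let ?P = "monomial u * F ^ (l + 1) :: 'a mpoly"
  have "euler_deriv i (G ^ Suc (m - 1)) = of_nat m * G ^ (m - 1) * (of_nat d * xpow i d)"
    using assms by (simp only: euler_deriv_power euler_deriv_fermat G_def) simp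
  then have euler_G: "euler_deriv i (G ^ m) = of_nat m * G ^ (m - 1) * (of_nat d * xpow i d)"
    using assms(2) by simp
  have "Poly_Mapping.single u (of_nat (Poly_Mapping.lookup u i)) =
      (of_nat (Poly_Mapping.lookup u i) * monomial u :: 'a mpoly)"
    by (simp add: of_nat_mult_single)
  then have euler_P: "euler_deriv i ?P =
      of_nat (Poly_Mapping.lookup u i) * ?P + monomial u * (of_nat (l + 1) * F ^ l * euler_deriv i F)"
    by (simp only: euler_deriv_single_mult euler_deriv_single Suc_eq_plus1[symmetric] euler_deriv_power)
      simp
  have "monomial (u + Poly_Mapping.single i d) = (monomial u * xpow i d :: 'a mpoly)"
    by (simp add: xpow_def mult_single)
  then have "of_nat (d * m) * (monomial (u + Poly_Mapping.single i d) * (G ^ (m - 1) * F ^ (l + 1))) =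
      ?P * euler_deriv i (G ^ m)"
    by (simp add: euler_G algebra_simps)
  also have "\<dots> = euler_deriv i (?P * G ^ m) - euler_deriv i ?P * G ^ m"
    by (simp add: euler_deriv_mult)
  also have "\<dots> = euler_deriv i (monomial u * F * (G ^ m * F ^ l))
    - of_nat (Poly_Mapping.lookup u i) * (monomial u * F * (G ^ m * F ^ l))
    - of_nat (l + 1) * (monomial u * euler_deriv i F * (G ^ m * F ^ l))"
    unfolding euler_P by (simp add: algebra_simps)
  finally show ?thesis .
qed

lemma bracket_reduction:
  fixes F :: "'a::comm_ring_1 mpoly" and n d :: nat
  assumes F: "homogeneous n d F" and t: "t \<in> B n h" and i: "i \<le> n" "d \<le> Poly_Mapping.lookup t i"
    and vw: "Poly_Mapping.keys v \<subseteq> {0..n}" "Poly_Mapping.keys w \<subseteq> {0..n}" and "0 < m"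
  defines "G \<equiv> fermat n d :: 'a mpoly" and "u \<equiv> t - Poly_Mapping.single i d"
  shows "of_nat (d * m) * bracket n v w k (G ^ (m - 1) * F ^ (l + 1)) t =
    (\<Sum>t'\<in>B n h. ((of_nat (k * Poly_Mapping.lookup v i + Poly_Mapping.lookup w i) - of_nat (Poly_Mapping.lookup u i))
        * Poly_Mapping.lookup (monomial u * F) t'
      - of_nat (l + 1) * Poly_Mapping.lookup (monomial u * euler_deriv i F) t')
      * bracket n v w k (G ^ m * F ^ l) t')"
    (is "_ = (\<Sum>t'\<in>_. ?row t' * _)")
proof -
  let ?N = "affine_exponent k v w"
  let ?P = "G ^ m * F ^ l"
  have u: "u \<in> B n (h - d)" "t = u + Poly_Mapping.single i d" "d \<le> h"
    using B_diff_single[OF t i] by (simp_all add: u_def)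
  have bracket_B: "bracket n v w k H t' = Poly_Mapping.lookup (monomial t' * H) ?N"
    if "t' \<in> B n h" for t' and H :: "'a mpoly"
    using that vw by (intro bracket_eq_lookup) (auto simp: B_def)
  have keys_F: "Poly_Mapping.keys F \<subseteq> B n d" "Poly_Mapping.keys (euler_deriv i F) \<subseteq> B n d"
    using F keys_euler_deriv by (auto simp: homogeneous_def)
  have "Poly_Mapping.keys (monomial u :: 'a mpoly) \<subseteq> B n (h - d)"
    using u(1) by simp
  from keys_mult_subset_B[OF this keys_F(1)] keys_mult_subset_B[OF this keys_F(2)]
  have keys_h: "Poly_Mapping.keys (monomial u * F) \<subseteq> B n h"
    "Poly_Mapping.keys (monomial u * euler_deriv i F) \<subseteq> B n h"
    using u(3) by simp_all
  have "of_nat (d * m) * bracket n v w k (G ^ (m - 1) * F ^ (l + 1)) t =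
      Poly_Mapping.lookup (of_nat (d * m) * (monomial (u + Poly_Mapping.single i d) * (G ^ (m - 1) * F ^ (l + 1)))) ?N"
    by (simp only: bracket_B[OF t] lookup_of_nat_mult u(2)[symmetric])
  also have "\<dots> = of_nat (Poly_Mapping.lookup ?N i) * Poly_Mapping.lookup (monomial u * F * ?P) ?N
      - of_nat (Poly_Mapping.lookup u i) * Poly_Mapping.lookup (monomial u * F * ?P) ?N
      - of_nat (l + 1) * Poly_Mapping.lookup (monomial u * euler_deriv i F * ?P) ?N"
    unfolding G_def fermat_power_reduction[OF i(1) \<open>0 < m\<close>]
    by (simp only: lookup_minus lookup_euler_deriv lookup_of_nat_mult)
  also have "\<dots> = (\<Sum>t'\<in>B n h. ?row t' * Poly_Mapping.lookup (monomial t' * ?P) ?N)"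
    unfolding lookup_mult_eq_sum_monomials[OF finite_B keys_h(1)] lookup_mult_eq_sum_monomials[OF finite_B keys_h(2)]
    by (simp add: lookup_affine_exponent sum_distrib_left sum_subtractf[symmetric] algebra_simps)
  also have "\<dots> = (\<Sum>t'\<in>B n h. ?row t' * bracket n v w k ?P t')"
    by (intro sum.cong) (simp_all add: bracket_B)
  finally show ?thesis .
qed

lemma bracket_recurrence_matrix:
  fixes F :: "'a::comm_ring_1 mpoly" and n d :: nat
  assumes F: "homogeneous n d F" and h: "(d - 1) * (n + 1) < h"
    and vw: "Poly_Mapping.keys v \<subseteq> {0..n}" "Poly_Mapping.keys w \<subseteq> {0..n}"
  obtains a b c :: "(nat \<Rightarrow>\<^sub>0 nat) \<Rightarrow> (nat \<Rightarrow>\<^sub>0 nat) \<Rightarrow> 'a" where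
    "\<And>k l K t. l < K \<Longrightarrow> t \<in> B n h \<Longrightarrow>
      of_nat (d * (K - l)) * bracket n v w k (fermat n d ^ (K - l - 1) * F ^ (l + 1)) t =
      matvec (B n h) (\<lambda>t t'. a t t' + of_nat k * b t t' + of_nat l * c t t')
        (bracket n v w k (fermat n d ^ (K - l) * F ^ l)) t"
proof -
  define idx where "idx t = (SOME i. i \<le> n \<and> d \<le> Poly_Mapping.lookup t i)" for t
  define u where "u t = t - Poly_Mapping.single (idx t) d" for t
  define C1 where "C1 t t' = Poly_Mapping.lookup (monomial (u t) * F) t'" for t t'
  define C2 where "C2 t t' = Poly_Mapping.lookup (monomial (u t) * euler_deriv (idx t) F) t'" for t t'
  have idx: "idx t \<le> n" "d \<le> Poly_Mapping.lookup t (idx t)" if "t \<in> B n h" for t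
    using B_obtain_large_exponent[OF that h] someI_ex unfolding idx_def by (metis (mono_tags, lifting))+
  define a where "a t t' = (of_nat (Poly_Mapping.lookup w (idx t)) - of_nat (Poly_Mapping.lookup (u t) (idx t))) * C1 t t'
    - C2 t t'" for t t'
  define b where "b t t' = of_nat (Poly_Mapping.lookup v (idx t)) * C1 t t'" for t t'
  define c where "c t t' = - C2 t t'" for t t'
  show thesis
    by (rule that[of a b c], unfold matvec_def a_def b_def c_def C1_def C2_def u_def,
        subst bracket_reduction[OF F _ idx vw]) (simp_all add: algebra_simps)
qed

lemma iter_mat_recurrence:
  fixes y :: "nat \<Rightarrow> 'i \<Rightarrow> 'a::comm_semiring_1"
  assumes rec: "\<And>j t. j < K \<Longrightarrow> t \<in> I \<Longrightarrow> c j * y (Suc j) t = matvec I (M j) (y j) t"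
  shows "j \<le> K \<Longrightarrow> t \<in> I \<Longrightarrow> (\<Prod>r<j. c r) * y j t = iter_mat I M j (y 0) t"
proof (induction j arbitrary: t)
  case 0
  then show ?case by simp
next
  case (Suc j)
  have "iter_mat I M (Suc j) (y 0) t = matvec I (M j) (\<lambda>t'. (\<Prod>r<j. c r) * y j t') t"
    using Suc by (simp add: matvec_def)
  also have "\<dots> = (\<Prod>r<j. c r) * matvec I (M j) (y j) t"
    by (simp add: matvec_def sum_distrib_left mult_ac)
  also have "\<dots> = (\<Prod>r<j. c r) * (c j * y (Suc j) t)"
    using rec[of j t] Suc.prems by simp
  also have "\<dots> = (\<Prod>r<Suc j. c r) * y (Suc j) t"
    by (simp add: mult_ac)
  finally show ?case ..
qed

lemma Fract_sum: "Fract (sum f A) (1::'a::idom) = (\<Sum>a\<in>A. Fract (f a) 1)"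
proof (induction A rule: infinite_finite_induct)
  case (insert a A)
  then show ?case
    by (simp flip: insert.IH)
qed (simp_all add: fract_collapse)

lemma Fract_matvec:
  "Fract (matvec I M x t) (1::'a::idom) = matvec I (\<lambda>t t'. Fract (M t t') 1) (\<lambda>t'. Fract (x t') 1) t"
  by (simp add: matvec_def Fract_sum)

lemma Fract_iter_mat_solution:
  fixes y :: "nat \<Rightarrow> 'i \<Rightarrow> 'a::{idom, ring_char_0}"
  assumes rec: "\<And>j t. j < K \<Longrightarrow> t \<in> I \<Longrightarrow>
      of_nat (d * (K - j)) * y (Suc j) t = matvec I (M j) (y j) t"
    and "0 < d" and "t \<in> I"
  shows "Fract (y K t) 1 = (1 / of_nat (d ^ K * fact K)) *
    iter_mat I (\<lambda>l t t'. Fract (M l t t') 1) K (\<lambda>t'. Fract (y 0 t') 1) t"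
proof -
  have prod: "(\<Prod>r<K. of_nat (d * (K - r))) = (of_nat (d ^ K * fact K) :: 'a fract)"
    by (simp only: of_nat_prod[symmetric] prod.distrib fact_prod_rev atLeast0LessThan) simp
  have "of_nat (d ^ K * fact K) * Fract (y K t) 1 =
      iter_mat I (\<lambda>l t t'. Fract (M l t t') 1) K (\<lambda>t'. Fract (y 0 t') 1) t"
    unfolding prod[symmetric]
  proof (rule iter_mat_recurrence[where y = "\<lambda>j t. Fract (y j t) 1"])
    fix j t assume "j < K" "t \<in> I"
    then show "of_nat (d * (K - j)) * Fract (y (Suc j) t) 1 =
        matvec I (\<lambda>t t'. Fract (M j t t') 1) (\<lambda>t'. Fract (y j t') 1) t"
      using rec by (simp add: of_nat_fract flip: Fract_matvec)
  qed (use \<open>t \<in> I\<close> in simp_all)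
  moreover have "(of_nat (d ^ K * fact K) :: 'a fract) \<noteq> 0"
    using \<open>0 < d\<close> by (simp add: of_nat_fract Zero_fract_def eq_fract)
  ultimately show ?thesis
    by (simp add: field_simps)
qed

theorem theorem4p1:
  fixes F :: "'a::{idom, ring_char_0} mpoly"
    and n d s h :: nat
    and v w :: "nat \<Rightarrow>\<^sub>0 nat"
  assumes "n \<ge> 1" and "d \<ge> 1"
    and "homogeneous n d F"
    and "s \<ge> 1"
    and "h \<ge> (d - 1) * (n + 1) + 1"
    and "v \<in> B n (d * s)" and "w \<in> B n h"
  shows "\<exists>a b c :: (nat \<Rightarrow>\<^sub>0 nat) \<Rightarrow> (nat \<Rightarrow>\<^sub>0 nat) \<Rightarrow> 'a.
    let G = (fermat n d :: 'a mpoly);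
        Q = (\<lambda>k l t t'. a t t' + of_nat k * b t t' + of_nat l * c t t')
    in (\<forall>k0 l0. k0 \<ge> 1 \<longrightarrow> l0 < k0 * s \<longrightarrow>
          (\<forall>t\<in>B n h.
             of_nat (d * (k0 * s - l0)) *
               bracket n v w k0 (G ^ (k0 * s - l0 - 1) * F ^ (l0 + 1)) t
             = matvec (B n h) (Q k0 l0) (bracket n v w k0 (G ^ (k0 * s - l0) * F ^ l0)) t))
     \<and> (\<forall>k0. k0 \<ge> 1 \<longrightarrow>
          (\<forall>t\<in>B n h.
             Fract (bracket n v w k0 (F ^ (k0 * s)) t) 1
             = (1 / (of_nat (d ^ (k0 * s) * fact (k0 * s)))) *
               iter_mat (B n h) (\<lambda>l t t'. Fract (Q k0 l t t') 1) (k0 * s)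
                 (\<lambda>t'. Fract (bracket n v w k0 (G ^ (k0 * s)) t') 1) t))"
proof -
  have vw: "Poly_Mapping.keys v \<subseteq> {0..n}" "Poly_Mapping.keys w \<subseteq> {0..n}"
    using assms(6,7) by (auto simp: B_def)
  have h: "(d - 1) * (n + 1) < h"
    using assms(5) by simp
  obtain a b c :: "(nat \<Rightarrow>\<^sub>0 nat) \<Rightarrow> (nat \<Rightarrow>\<^sub>0 nat) \<Rightarrow> 'a" where rec:
    "\<And>k l K t. l < K \<Longrightarrow> t \<in> B n h \<Longrightarrow>
      of_nat (d * (K - l)) * bracket n v w k (fermat n d ^ (K - l - 1) * F ^ (l + 1)) t =
      matvec (B n h) (\<lambda>t t'. a t t' + of_nat k * b t t' + of_nat l * c t t')
        (bracket n v w k (fermat n d ^ (K - l) * F ^ l)) t"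
    using bracket_recurrence_matrix[OF assms(3) h vw] by blast
  have closed_form: "Fract (bracket n v w k (F ^ K) t) 1 =
      (1 / of_nat (d ^ K * fact K)) *
      iter_mat (B n h) (\<lambda>l t t'. Fract (a t t' + of_nat k * b t t' + of_nat l * c t t') 1) K
        (\<lambda>t'. Fract (bracket n v w k (fermat n d ^ K) t') 1) t"
    if "t \<in> B n h" for k K t
    using Fract_iter_mat_solution[where y = "\<lambda>j. bracket n v w k (fermat n d ^ (K - j) * F ^ j)",
        OF rec[unfolded diff_diff_left Suc_eq_plus1[symmetric]] _ that] assms(2)
    by simp
  show ?thesis
    unfolding Let_def
    by (rule exI[of _ a], rule exI[of _ b], rule exI[of _ c], intro conjI allI impI ballI rec)
      (simp_all add: closed_form)
qed

end
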